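(* Let $\mathcal T$ be a self-orthogonal subcategory of $\mathcal C$ and $n\ge0$. Then $\mathrm{Pres}^n(\mathcal T)=\mathrm{Pres}^n({}_{\mathcal T}\mathcal X)$.
   Context: $(\mathcal C,\mathbb E,\mathfrak s)$ is an extriangulated category in the sense of Nakaoka–Palu, Krull–Schmidt, with enough projectives and enough injectives; subcategories are full, additive, closed under isomorphisms. Higher extensions: $\mathbb E^1=\mathbb E$, $\mathbb E^{i+1}(X,Y)=\mathbb E(\Omega^iX,Y)\cong\mathbb E(X,\Sigma^iY)$. $\mathcal T$ is self-orthogonal if $\mathbb E^i(T_1,T_2)=0$ for all $i\ge1$, $T_1,T_2\in\mathcal T$. $\mathcal T^{\perp}=\{Y:\mathbb E^i(T,Y)=0\ \forall i\ge1,\forall T\in\mathcal T\}$. ${}_{\mathcal T}\mathcal X$ is the subcategory of objects $A$ for which there exist $\mathbb E$-triangles $K_{i+1}\to T_i\to K_i\dashrightarrow$ for all $i\ge0$ with $K_0=A$, $T_i\in\mathcal T$, $K_{i+1}\in\mathcal T^{\perp}$. For a subcategory $\mathcal S$, $\mathrm{Pres}^n(\mathcal S)$ is the subcategory of objects $A$ for which there exist $\mathbb E$-triangles $K_{i+1}\to S_i\to K_i\dashrightarrow$ for $1\le i\le n$ with $K_1=A$ and all $S_i\in\mathcal S$. *)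

theory Defs
  imports Main
begin

section \<open>Extriangulated categories (Nakaoka--Palu), encoded concretely\<close>

text \<open>Hom X A B is the set of morphisms A -> B (hom sets of different pairs are disjoint),
  cp X g f is the composite g o f, EE X C A is the abelian group E(C,A),
  push X a d = a_* d, pull X c d = c^* d, and rlz X d x y means that the
  sequence A -x-> B -y-> C belongs to the equivalence class s(d).\<close>

record ('o,'m,'e) extri_data =
  Obj   :: "'o set"
  Hom   :: "'o \<Rightarrow> 'o \<Rightarrow> 'm set"
  cp    :: "'m \<Rightarrow> 'm \<Rightarrow> 'm"
  idm   :: "'o \<Rightarrow> 'm"
  madd  :: "'m \<Rightarrow> 'm \<Rightarrow> 'm"
  mzero :: "'o \<Rightarrow> 'o \<Rightarrow> 'm"
  mneg  :: "'m \<Rightarrow> 'm"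
  EE    :: "'o \<Rightarrow> 'o \<Rightarrow> 'e set"
  eadd  :: "'e \<Rightarrow> 'e \<Rightarrow> 'e"
  ezero :: "'o \<Rightarrow> 'o \<Rightarrow> 'e"
  eneg  :: "'e \<Rightarrow> 'e"
  push  :: "'m \<Rightarrow> 'e \<Rightarrow> 'e"
  pull  :: "'m \<Rightarrow> 'e \<Rightarrow> 'e"
  rlz   :: "'e \<Rightarrow> 'm \<Rightarrow> 'm \<Rightarrow> bool"

definition abgroup_on :: "'a set \<Rightarrow> ('a \<Rightarrow> 'a \<Rightarrow> 'a) \<Rightarrow> 'a \<Rightarrow> ('a \<Rightarrow> 'a) \<Rightarrow> bool" where
  "abgroup_on G p z n \<longleftrightarrow> z \<in> G \<and> (\<forall>x\<in>G. \<forall>y\<in>G. p x y \<in> G) \<and> (\<forall>x\<in>G. n x \<in> G)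
     \<and> (\<forall>x\<in>G. \<forall>y\<in>G. \<forall>w\<in>G. p (p x y) w = p x (p y w))
     \<and> (\<forall>x\<in>G. \<forall>y\<in>G. p x y = p y x) \<and> (\<forall>x\<in>G. p z x = x) \<and> (\<forall>x\<in>G. p (n x) x = z)"

definition is_category :: "('o,'m,'e) extri_data \<Rightarrow> bool" where
  "is_category X \<longleftrightarrow>
     (\<forall>A B. (A \<notin> Obj X \<or> B \<notin> Obj X) \<longrightarrow> Hom X A B = {}) \<and>
     (\<forall>A B A' B' f. f \<in> Hom X A B \<longrightarrow> f \<in> Hom X A' B' \<longrightarrow> A = A' \<and> B = B') \<and>
     (\<forall>A\<in>Obj X. idm X A \<in> Hom X A A) \<and>
     (\<forall>A B C f g. f \<in> Hom X A B \<longrightarrow> g \<in> Hom X B C \<longrightarrow> cp X g f \<in> Hom X A C) \<and>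
     (\<forall>A B C D f g h. f \<in> Hom X A B \<longrightarrow> g \<in> Hom X B C \<longrightarrow> h \<in> Hom X C D \<longrightarrow>
        cp X h (cp X g f) = cp X (cp X h g) f) \<and>
     (\<forall>A B f. f \<in> Hom X A B \<longrightarrow> cp X (idm X B) f = f \<and> cp X f (idm X A) = f)"

definition is_iso :: "('o,'m,'e) extri_data \<Rightarrow> 'm \<Rightarrow> 'o \<Rightarrow> 'o \<Rightarrow> bool" where
  "is_iso X f A B \<longleftrightarrow> f \<in> Hom X A B \<and> (\<exists>g\<in>Hom X B A. cp X g f = idm X A \<and> cp X f g = idm X B)"

definition isomorphic :: "('o,'m,'e) extri_data \<Rightarrow> 'o \<Rightarrow> 'o \<Rightarrow> bool" where
  "isomorphic X A B \<longleftrightarrow> (\<exists>f. is_iso X f A B)"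

definition preadditive :: "('o,'m,'e) extri_data \<Rightarrow> bool" where
  "preadditive X \<longleftrightarrow> is_category X \<and>
     (\<forall>A\<in>Obj X. \<forall>B\<in>Obj X. abgroup_on (Hom X A B) (madd X) (mzero X A B) (mneg X)) \<and>
     (\<forall>A B C f f' g. f \<in> Hom X A B \<longrightarrow> f' \<in> Hom X A B \<longrightarrow> g \<in> Hom X B C \<longrightarrow>
        cp X g (madd X f f') = madd X (cp X g f) (cp X g f')) \<and>
     (\<forall>A B C f g g'. f \<in> Hom X A B \<longrightarrow> g \<in> Hom X B C \<longrightarrow> g' \<in> Hom X B C \<longrightarrow>
        cp X (madd X g g') f = madd X (cp X g f) (cp X g' f))"

definition is_zero_obj :: "('o,'m,'e) extri_data \<Rightarrow> 'o \<Rightarrow> bool" where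
  "is_zero_obj X Z \<longleftrightarrow> Z \<in> Obj X \<and> idm X Z = mzero X Z Z"

definition is_biprod :: "('o,'m,'e) extri_data \<Rightarrow> 'o \<Rightarrow> 'o \<Rightarrow> 'o \<Rightarrow> 'm \<Rightarrow> 'm \<Rightarrow> 'm \<Rightarrow> 'm \<Rightarrow> bool" where
  "is_biprod X A B S i1 i2 p1 p2 \<longleftrightarrow> S \<in> Obj X \<and>
     i1 \<in> Hom X A S \<and> i2 \<in> Hom X B S \<and> p1 \<in> Hom X S A \<and> p2 \<in> Hom X S B \<and>
     cp X p1 i1 = idm X A \<and> cp X p2 i2 = idm X B \<and>
     cp X p1 i2 = mzero X B A \<and> cp X p2 i1 = mzero X A B \<and>
     madd X (cp X i1 p1) (cp X i2 p2) = idm X S"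

definition additive_cat :: "('o,'m,'e) extri_data \<Rightarrow> bool" where
  "additive_cat X \<longleftrightarrow> preadditive X \<and> (\<exists>Z. is_zero_obj X Z) \<and>
     (\<forall>A\<in>Obj X. \<forall>B\<in>Obj X. \<exists>S i1 i2 p1 p2. is_biprod X A B S i1 i2 p1 p2)"

definition biadditive_E :: "('o,'m,'e) extri_data \<Rightarrow> bool" where
  "biadditive_E X \<longleftrightarrow>
     (\<forall>C A. (C \<notin> Obj X \<or> A \<notin> Obj X) \<longrightarrow> EE X C A = {}) \<and>
     (\<forall>C A C' A' d. d \<in> EE X C A \<longrightarrow> d \<in> EE X C' A' \<longrightarrow> C = C' \<and> A = A') \<and>
     (\<forall>C\<in>Obj X. \<forall>A\<in>Obj X. abgroup_on (EE X C A) (eadd X) (ezero X C A) (eneg X)) \<and>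
     (\<forall>C A A' a d. a \<in> Hom X A A' \<longrightarrow> d \<in> EE X C A \<longrightarrow> push X a d \<in> EE X C A') \<and>
     (\<forall>C C' A c d. c \<in> Hom X C' C \<longrightarrow> d \<in> EE X C A \<longrightarrow> pull X c d \<in> EE X C' A) \<and>
     (\<forall>C A d. d \<in> EE X C A \<longrightarrow> push X (idm X A) d = d \<and> pull X (idm X C) d = d) \<and>
     (\<forall>C A A' A'' a a' d. a \<in> Hom X A A' \<longrightarrow> a' \<in> Hom X A' A'' \<longrightarrow> d \<in> EE X C A \<longrightarrow>
        push X (cp X a' a) d = push X a' (push X a d)) \<and>
     (\<forall>C C' C'' A c c' d. c \<in> Hom X C' C \<longrightarrow> c' \<in> Hom X C'' C' \<longrightarrow> d \<in> EE X C A \<longrightarrow>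
        pull X (cp X c c') d = pull X c' (pull X c d)) \<and>
     (\<forall>C C' A A' a c d. a \<in> Hom X A A' \<longrightarrow> c \<in> Hom X C' C \<longrightarrow> d \<in> EE X C A \<longrightarrow>
        push X a (pull X c d) = pull X c (push X a d)) \<and>
     (\<forall>C A A' a d d'. a \<in> Hom X A A' \<longrightarrow> d \<in> EE X C A \<longrightarrow> d' \<in> EE X C A \<longrightarrow>
        push X a (eadd X d d') = eadd X (push X a d) (push X a d')) \<and>
     (\<forall>C C' A c d d'. c \<in> Hom X C' C \<longrightarrow> d \<in> EE X C A \<longrightarrow> d' \<in> EE X C A \<longrightarrow>
        pull X c (eadd X d d') = eadd X (pull X c d) (pull X c d')) \<and>
     (\<forall>C A A' a a' d. a \<in> Hom X A A' \<longrightarrow> a' \<in> Hom X A A' \<longrightarrow> d \<in> EE X C A \<longrightarrow>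
        push X (madd X a a') d = eadd X (push X a d) (push X a' d)) \<and>
     (\<forall>C C' A c c' d. c \<in> Hom X C' C \<longrightarrow> c' \<in> Hom X C' C \<longrightarrow> d \<in> EE X C A \<longrightarrow>
        pull X (madd X c c') d = eadd X (pull X c d) (pull X c' d))"

definition realization :: "('o,'m,'e) extri_data \<Rightarrow> bool" where
  "realization X \<longleftrightarrow>
     (\<forall>d x y. rlz X d x y \<longrightarrow> (\<exists>A B C. d \<in> EE X C A \<and> x \<in> Hom X A B \<and> y \<in> Hom X B C)) \<and>
     (\<forall>C A d. d \<in> EE X C A \<longrightarrow> (\<exists>B x y. x \<in> Hom X A B \<and> y \<in> Hom X B C \<and> rlz X d x y)) \<and>
     (\<forall>A B B' C d x y x' y'. d \<in> EE X C A \<longrightarrow> x \<in> Hom X A B \<longrightarrow> y \<in> Hom X B C \<longrightarrow> rlz X d x y \<longrightarrow>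
        x' \<in> Hom X A B' \<longrightarrow> y' \<in> Hom X B' C \<longrightarrow>
        (rlz X d x' y' \<longleftrightarrow> (\<exists>b. is_iso X b B B' \<and> cp X b x = x' \<and> cp X y' b = y))) \<and>
     (\<forall>A B C A' B' C' d d' x y x' y' a c.
        d \<in> EE X C A \<longrightarrow> x \<in> Hom X A B \<longrightarrow> y \<in> Hom X B C \<longrightarrow> rlz X d x y \<longrightarrow>
        d' \<in> EE X C' A' \<longrightarrow> x' \<in> Hom X A' B' \<longrightarrow> y' \<in> Hom X B' C' \<longrightarrow> rlz X d' x' y' \<longrightarrow>
        a \<in> Hom X A A' \<longrightarrow> c \<in> Hom X C C' \<longrightarrow> push X a d = pull X c d' \<longrightarrow>
        (\<exists>b\<in>Hom X B B'. cp X b x = cp X x' a \<and> cp X y' b = cp X c y))"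

definition additive_realization :: "('o,'m,'e) extri_data \<Rightarrow> bool" where
  "additive_realization X \<longleftrightarrow>
     (\<forall>A C S i1 i2 p1 p2. is_biprod X A C S i1 i2 p1 p2 \<longrightarrow> rlz X (ezero X C A) i1 p2) \<and>
     (\<forall>A B C A' B' C' d d' x y x' y' SA iA iA' pA pA' SB iB iB' pB pB' SC iC iC' pC pC'.
        d \<in> EE X C A \<longrightarrow> x \<in> Hom X A B \<longrightarrow> y \<in> Hom X B C \<longrightarrow> rlz X d x y \<longrightarrow>
        d' \<in> EE X C' A' \<longrightarrow> x' \<in> Hom X A' B' \<longrightarrow> y' \<in> Hom X B' C' \<longrightarrow> rlz X d' x' y' \<longrightarrow>
        is_biprod X A A' SA iA iA' pA pA' \<longrightarrow>
        is_biprod X B B' SB iB iB' pB pB' \<longrightarrow>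
        is_biprod X C C' SC iC iC' pC pC' \<longrightarrow>
        rlz X (eadd X (push X iA (pull X pC d)) (push X iA' (pull X pC' d')))
              (madd X (cp X iB (cp X x pA)) (cp X iB' (cp X x' pA')))
              (madd X (cp X iC (cp X y pB)) (cp X iC' (cp X y' pB'))))"

definition ET3 :: "('o,'m,'e) extri_data \<Rightarrow> bool" where
  "ET3 X \<longleftrightarrow>
     (\<forall>A B C A' B' C' d d' x y x' y' a b.
        d \<in> EE X C A \<longrightarrow> x \<in> Hom X A B \<longrightarrow> y \<in> Hom X B C \<longrightarrow> rlz X d x y \<longrightarrow>
        d' \<in> EE X C' A' \<longrightarrow> x' \<in> Hom X A' B' \<longrightarrow> y' \<in> Hom X B' C' \<longrightarrow> rlz X d' x' y' \<longrightarrow>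
        a \<in> Hom X A A' \<longrightarrow> b \<in> Hom X B B' \<longrightarrow> cp X b x = cp X x' a \<longrightarrow>
        (\<exists>c\<in>Hom X C C'. push X a d = pull X c d' \<and> cp X c y = cp X y' b))"

definition ET3op :: "('o,'m,'e) extri_data \<Rightarrow> bool" where
  "ET3op X \<longleftrightarrow>
     (\<forall>A B C A' B' C' d d' x y x' y' b c.
        d \<in> EE X C A \<longrightarrow> x \<in> Hom X A B \<longrightarrow> y \<in> Hom X B C \<longrightarrow> rlz X d x y \<longrightarrow>
        d' \<in> EE X C' A' \<longrightarrow> x' \<in> Hom X A' B' \<longrightarrow> y' \<in> Hom X B' C' \<longrightarrow> rlz X d' x' y' \<longrightarrow>
        b \<in> Hom X B B' \<longrightarrow> c \<in> Hom X C C' \<longrightarrow> cp X y' b = cp X c y \<longrightarrow>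
        (\<exists>a\<in>Hom X A A'. push X a d = pull X c d' \<and> cp X b x = cp X x' a))"

definition ET4 :: "('o,'m,'e) extri_data \<Rightarrow> bool" where
  "ET4 X \<longleftrightarrow>
     (\<forall>A B C D F f f' g g' d d'.
        d \<in> EE X D A \<longrightarrow> f \<in> Hom X A B \<longrightarrow> f' \<in> Hom X B D \<longrightarrow> rlz X d f f' \<longrightarrow>
        d' \<in> EE X F B \<longrightarrow> g \<in> Hom X B C \<longrightarrow> g' \<in> Hom X C F \<longrightarrow> rlz X d' g g' \<longrightarrow>
        (\<exists>E h h' dd e d''. E \<in> Obj X \<and> h \<in> Hom X A C \<and> h' \<in> Hom X C E \<and>
           dd \<in> Hom X D E \<and> e \<in> Hom X E F \<and> d'' \<in> EE X E A \<and> rlz X d'' h h' \<and>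
           h = cp X g f \<and> cp X dd f' = cp X h' g \<and> cp X e h' = g' \<and>
           rlz X (push X f' d') dd e \<and> pull X dd d'' = d \<and> push X f d'' = pull X e d'))"

definition ET4op :: "('o,'m,'e) extri_data \<Rightarrow> bool" where
  "ET4op X \<longleftrightarrow>
     (\<forall>D A B F C f' f g' g d d'.
        d \<in> EE X B D \<longrightarrow> f' \<in> Hom X D A \<longrightarrow> f \<in> Hom X A B \<longrightarrow> rlz X d f' f \<longrightarrow>
        d' \<in> EE X C F \<longrightarrow> g' \<in> Hom X F B \<longrightarrow> g \<in> Hom X B C \<longrightarrow> rlz X d' g' g \<longrightarrow>
        (\<exists>E dd e h' h d''. E \<in> Obj X \<and> dd \<in> Hom X D E \<and> e \<in> Hom X E F \<and>
           h' \<in> Hom X E A \<and> h \<in> Hom X A C \<and> d'' \<in> EE X C E \<and> rlz X d'' h' h \<and>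
           h = cp X g f \<and> cp X h' dd = f' \<and> cp X g' e = cp X f h' \<and>
           rlz X (pull X g' d) dd e \<and> d' = push X e d'' \<and> push X dd d = pull X g d''))"

definition extriangulated :: "('o,'m,'e) extri_data \<Rightarrow> bool" where
  "extriangulated X \<longleftrightarrow> additive_cat X \<and> biadditive_E X \<and> realization X \<and>
     additive_realization X \<and> ET3 X \<and> ET3op X \<and> ET4 X \<and> ET4op X"

definition etri :: "('o,'m,'e) extri_data \<Rightarrow> 'o \<Rightarrow> 'o \<Rightarrow> 'o \<Rightarrow> bool" where
  "etri X A B C \<longleftrightarrow> (\<exists>d x y. d \<in> EE X C A \<and> x \<in> Hom X A B \<and> y \<in> Hom X B C \<and> rlz X d x y)"

fun msum :: "('o,'m,'e) extri_data \<Rightarrow> 'o \<Rightarrow> 'o \<Rightarrow> (nat \<Rightarrow> 'm) \<Rightarrow> nat \<Rightarrow> 'm" where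
  "msum X A B fs 0 = mzero X A B"
| "msum X A B fs (Suc n) = madd X (msum X A B fs n) (fs n)"

definition local_end :: "('o,'m,'e) extri_data \<Rightarrow> 'o \<Rightarrow> bool" where
  "local_end X Y \<longleftrightarrow> Y \<in> Obj X \<and> idm X Y \<noteq> mzero X Y Y \<and>
     (\<forall>f\<in>Hom X Y Y. is_iso X f Y Y \<or> is_iso X (madd X (idm X Y) (mneg X f)) Y Y)"

definition is_dsum :: "('o,'m,'e) extri_data \<Rightarrow> 'o \<Rightarrow> nat \<Rightarrow> (nat \<Rightarrow> 'o) \<Rightarrow> (nat \<Rightarrow> 'm) \<Rightarrow> (nat \<Rightarrow> 'm) \<Rightarrow> bool" where
  "is_dsum X Y n Ys ins prs \<longleftrightarrow> Y \<in> Obj X \<and>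
     (\<forall>i<n. Ys i \<in> Obj X \<and> ins i \<in> Hom X (Ys i) Y \<and> prs i \<in> Hom X Y (Ys i)) \<and>
     (\<forall>i<n. \<forall>j<n. cp X (prs i) (ins j) = (if i = j then idm X (Ys i) else mzero X (Ys j) (Ys i))) \<and>
     msum X Y Y (\<lambda>i. cp X (ins i) (prs i)) n = idm X Y"

definition krull_schmidt :: "('o,'m,'e) extri_data \<Rightarrow> bool" where
  "krull_schmidt X \<longleftrightarrow> (\<forall>Y\<in>Obj X. \<exists>n Ys ins prs. is_dsum X Y n Ys ins prs \<and> (\<forall>i<n. local_end X (Ys i)))"

definition projective :: "('o,'m,'e) extri_data \<Rightarrow> 'o \<Rightarrow> bool" where
  "projective X P \<longleftrightarrow> P \<in> Obj X \<and>
     (\<forall>A B C d x y c. d \<in> EE X C A \<longrightarrow> x \<in> Hom X A B \<longrightarrow> y \<in> Hom X B C \<longrightarrow> rlz X d x y \<longrightarrow>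
        c \<in> Hom X P C \<longrightarrow> (\<exists>b\<in>Hom X P B. cp X y b = c))"

definition injective :: "('o,'m,'e) extri_data \<Rightarrow> 'o \<Rightarrow> bool" where
  "injective X I \<longleftrightarrow> I \<in> Obj X \<and>
     (\<forall>A B C d x y a. d \<in> EE X C A \<longrightarrow> x \<in> Hom X A B \<longrightarrow> y \<in> Hom X B C \<longrightarrow> rlz X d x y \<longrightarrow>
        a \<in> Hom X A I \<longrightarrow> (\<exists>b\<in>Hom X B I. cp X b x = a))"

definition enough_projectives :: "('o,'m,'e) extri_data \<Rightarrow> bool" where
  "enough_projectives X \<longleftrightarrow> (\<forall>C\<in>Obj X. \<exists>A P. projective X P \<and> etri X A P C)"

definition enough_injectives :: "('o,'m,'e) extri_data \<Rightarrow> bool" where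
  "enough_injectives X \<longleftrightarrow> (\<forall>A\<in>Obj X. \<exists>I C. injective X I \<and> etri X A I C)"

definition Omega :: "('o,'m,'e) extri_data \<Rightarrow> 'o \<Rightarrow> 'o" where
  "Omega X Y = (SOME K. K \<in> Obj X \<and> (\<exists>P. projective X P \<and> etri X K P Y))"

text \<open>Higher extensions: E^(i+1)(Y,Z) = E(Omega^i Y, Z); note EE X C A = E(C,A).\<close>
definition Ehi :: "('o,'m,'e) extri_data \<Rightarrow> nat \<Rightarrow> 'o \<Rightarrow> 'o \<Rightarrow> 'e set" where
  "Ehi X i Y Z = EE X ((Omega X ^^ (i - 1)) Y) Z"

definition Ehi_vanishes :: "('o,'m,'e) extri_data \<Rightarrow> nat \<Rightarrow> 'o \<Rightarrow> 'o \<Rightarrow> bool" where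
  "Ehi_vanishes X i Y Z \<longleftrightarrow> Ehi X i Y Z = {ezero X ((Omega X ^^ (i - 1)) Y) Z}"

text \<open>Full additive subcategory closed under isomorphisms, given by its class of objects.\<close>
definition subcat :: "('o,'m,'e) extri_data \<Rightarrow> 'o set \<Rightarrow> bool" where
  "subcat X T \<longleftrightarrow> T \<subseteq> Obj X \<and>
     (\<forall>A B. A \<in> T \<longrightarrow> isomorphic X A B \<longrightarrow> B \<in> T) \<and>
     (\<exists>Z\<in>T. is_zero_obj X Z) \<and>
     (\<forall>A B S i1 i2 p1 p2. A \<in> T \<longrightarrow> B \<in> T \<longrightarrow> is_biprod X A B S i1 i2 p1 p2 \<longrightarrow> S \<in> T)"

definition self_orthogonal :: "('o,'m,'e) extri_data \<Rightarrow> 'o set \<Rightarrow> bool" where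
  "self_orthogonal X T \<longleftrightarrow> (\<forall>i\<ge>1. \<forall>T1\<in>T. \<forall>T2\<in>T. Ehi_vanishes X i T1 T2)"

definition perp :: "('o,'m,'e) extri_data \<Rightarrow> 'o set \<Rightarrow> 'o set" where
  "perp X T = {Y \<in> Obj X. \<forall>i\<ge>1. \<forall>T1\<in>T. Ehi_vanishes X i T1 Y}"

definition TX :: "('o,'m,'e) extri_data \<Rightarrow> 'o set \<Rightarrow> 'o set" where
  "TX X T = {A \<in> Obj X. \<exists>K Ts. K 0 = A \<and>
      (\<forall>i. Ts i \<in> T \<and> K (Suc i) \<in> perp X T \<and> etri X (K (Suc i)) (Ts i) (K i))}"

definition Pres :: "('o,'m,'e) extri_data \<Rightarrow> nat \<Rightarrow> 'o set \<Rightarrow> 'o set" where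
  "Pres X n S = {A \<in> Obj X. \<exists>K Ss. K 1 = A \<and>
      (\<forall>i. 1 \<le> i \<and> i \<le> n \<longrightarrow> Ss i \<in> S \<and> etri X (K (Suc i)) (Ss i) (K i))}"

end

theory Submission
  imports Defs
begin

text \<open>Since every object A of T sits in the E-triangle 0 \<rightarrow> A \<rightarrow> A and 0 lies in
  T^\<perp>, T is contained in {}_T X, which gives one inclusion. For the other one the key
  fact is that Pres^m(T) is closed under E-triangles L \<rightarrow> E \<rightarrow> K whose first term L
  has a T-resolution inside T^\<perp>. This is a horseshoe argument: given F \<rightarrow> B \<rightarrow> K and
  L' \<rightarrow> T_L \<rightarrow> L with B, T_L in T, the pullback diagram of the two triangles over K
  (Nakaoka--Palu, Prop. 3.15) has middle term M with an E-triangle L \<rightarrow> M \<rightarrow> B, which splits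
  because E(B, L) = 0. Adding B to L' \<rightarrow> T_L \<rightarrow> L gives L' \<rightarrow> T_L \<oplus> B \<rightarrow> M, and (ET4)^op
  against F \<rightarrow> M \<rightarrow> E yields G \<rightarrow> T_L \<oplus> B \<rightarrow> E with L' \<rightarrow> G \<rightarrow> F, so induction applies
  to G. An object of Pres^n({}_T X) is then rewritten, again by (ET4)^op, as the end of a
  triangle E \<rightarrow> T_0 \<rightarrow> A whose first term is such an extension of an object of
  Pres^(n-1)(T).\<close>

lemma abgroup_on_zero_right: "abgroup_on G p z n \<Longrightarrow> x \<in> G \<Longrightarrow> p x z = x"
  unfolding abgroup_on_def by metis

lemma abgroup_on_neg_right: "abgroup_on G p z n \<Longrightarrow> x \<in> G \<Longrightarrow> p x (n x) = z"
  unfolding abgroup_on_def by metis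

lemma abgroup_on_neg_unique:
  assumes G: "abgroup_on G p z n" and xy: "x \<in> G" "y \<in> G" "p x y = z"
  shows "x = n y"
proof -
  have "x = p x (p y (n y))" using G xy by (simp add: abgroup_on_neg_right abgroup_on_zero_right)
  also have "\<dots> = p (p x y) (n y)" using G xy unfolding abgroup_on_def by metis
  also have "\<dots> = n y" using G xy unfolding abgroup_on_def by metis
  finally show ?thesis .
qed

lemma abgroup_on_add_neg_cancel:
  assumes G: "abgroup_on G p z n" and abc: "a \<in> G" "b \<in> G" "c \<in> G"
  shows "p (p a (n c)) (p b c) = p a b"
proof -
  have closed: "p x y \<in> G" "n x \<in> G" if "x \<in> G" "y \<in> G" for x y
    using G that unfolding abgroup_on_def by blast+
  have assoc: "p (p x y) w = p x (p y w)" and comm: "p x y = p y x"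
    if "x \<in> G" "y \<in> G" "w \<in> G" for x y w
    using G that unfolding abgroup_on_def by blast+
  have "p (n c) (p b c) = p b (p (n c) c)"
    using assoc[of "n c" b c] assoc[of b "n c" c] comm[of "n c" b] closed abc by metis
  also have "\<dots> = b" using G abc abgroup_on_zero_right unfolding abgroup_on_def by metis
  finally show ?thesis using assoc[of a "n c" "p b c"] closed abc by metis
qed

lemma abgroup_on_idem_zero:
  assumes G: "abgroup_on G p z n" and x: "x \<in> G" "p x x = x"
  shows "x = z"
proof -
  have "z = p (n x) (p x x)" using G x unfolding abgroup_on_def by metis
  also have "\<dots> = p (p (n x) x) x" using G x unfolding abgroup_on_def by metis
  also have "\<dots> = x" using G x unfolding abgroup_on_def by metis
  finally show ?thesis by simp
qed

locale extriangulated_cat =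
  fixes X :: "('o,'m,'e) extri_data"
  assumes extriangulated: "extriangulated X"
begin

lemma category: "is_category X"
  using extriangulated by (simp add: extriangulated_def additive_cat_def preadditive_def)
lemma preadditive: "preadditive X"
  using extriangulated by (simp add: extriangulated_def additive_cat_def)
lemma biadditive: "biadditive_E X"
  using extriangulated by (simp add: extriangulated_def)

lemma hom_objs: "f \<in> Hom X A B \<Longrightarrow> A \<in> Obj X \<and> B \<in> Obj X"
  using category unfolding is_category_def by (metis empty_iff)
lemma id_hom: "A \<in> Obj X \<Longrightarrow> idm X A \<in> Hom X A A"
  using category unfolding is_category_def by blast
lemma comp_hom: "f \<in> Hom X A B \<Longrightarrow> g \<in> Hom X B C \<Longrightarrow> cp X g f \<in> Hom X A C"
  using category unfolding is_category_def by blast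
lemma comp_assoc: "f \<in> Hom X A B \<Longrightarrow> g \<in> Hom X B C \<Longrightarrow> h \<in> Hom X C D \<Longrightarrow>
    cp X (cp X h g) f = cp X h (cp X g f)"
proof -
  assume "f \<in> Hom X A B" "g \<in> Hom X B C" "h \<in> Hom X C D"
  then have "cp X h (cp X g f) = cp X (cp X h g) f"
    using category unfolding is_category_def by blast
  then show ?thesis by simp
qed
lemma comp_id_left: "f \<in> Hom X A B \<Longrightarrow> cp X (idm X B) f = f"
  using category unfolding is_category_def by blast
lemma comp_id_right: "f \<in> Hom X A B \<Longrightarrow> cp X f (idm X A) = f"
  using category unfolding is_category_def by blast

lemma hom_abgroup: "f \<in> Hom X A B \<Longrightarrow> abgroup_on (Hom X A B) (madd X) (mzero X A B) (mneg X)"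
  using preadditive hom_objs unfolding preadditive_def by blast
lemma comp_distrib_left: "f \<in> Hom X A B \<Longrightarrow> f' \<in> Hom X A B \<Longrightarrow> g \<in> Hom X B C \<Longrightarrow>
    cp X g (madd X f f') = madd X (cp X g f) (cp X g f')"
  using preadditive unfolding preadditive_def by blast
lemma comp_distrib_right: "f \<in> Hom X A B \<Longrightarrow> g \<in> Hom X B C \<Longrightarrow> g' \<in> Hom X B C \<Longrightarrow>
    cp X (madd X g g') f = madd X (cp X g f) (cp X g' f)"
  using preadditive unfolding preadditive_def by blast

lemma mzero_hom: "A \<in> Obj X \<Longrightarrow> B \<in> Obj X \<Longrightarrow> mzero X A B \<in> Hom X A B"
  using preadditive unfolding preadditive_def abgroup_on_def by blast
lemma madd_hom: "f \<in> Hom X A B \<Longrightarrow> g \<in> Hom X A B \<Longrightarrow> madd X f g \<in> Hom X A B"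
  using hom_abgroup unfolding abgroup_on_def by blast
lemma mneg_hom: "f \<in> Hom X A B \<Longrightarrow> mneg X f \<in> Hom X A B"
  using hom_abgroup unfolding abgroup_on_def by blast
lemma madd_commute: "f \<in> Hom X A B \<Longrightarrow> g \<in> Hom X A B \<Longrightarrow> madd X f g = madd X g f"
  using hom_abgroup unfolding abgroup_on_def by blast
lemma madd_zero_left: "f \<in> Hom X A B \<Longrightarrow> madd X (mzero X A B) f = f"
  using hom_abgroup unfolding abgroup_on_def by blast
lemma madd_zero_right: "f \<in> Hom X A B \<Longrightarrow> madd X f (mzero X A B) = f"
  by (rule abgroup_on_zero_right[OF hom_abgroup])
lemma madd_neg_left: "f \<in> Hom X A B \<Longrightarrow> madd X (mneg X f) f = mzero X A B"
  using hom_abgroup unfolding abgroup_on_def by blast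
lemma mneg_unique: "f \<in> Hom X A B \<Longrightarrow> g \<in> Hom X A B \<Longrightarrow> madd X f g = mzero X A B \<Longrightarrow> f = mneg X g"
  by (rule abgroup_on_neg_unique[OF hom_abgroup])

lemma mneg_zero: "A \<in> Obj X \<Longrightarrow> B \<in> Obj X \<Longrightarrow> mneg X (mzero X A B) = mzero X A B"
  by (metis mneg_unique madd_zero_left mzero_hom)

lemma comp_zero_right:
  assumes g: "g \<in> Hom X B C" and A: "A \<in> Obj X"
  shows "cp X g (mzero X A B) = mzero X A C"
proof -
  have z: "mzero X A B \<in> Hom X A B" using g A hom_objs mzero_hom by blast
  then have "madd X (cp X g (mzero X A B)) (cp X g (mzero X A B)) = cp X g (mzero X A B)"
    using comp_distrib_left[OF z z g] madd_zero_left by simp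
  moreover have "cp X g (mzero X A B) \<in> Hom X A C" using comp_hom[OF z g] .
  ultimately show ?thesis using abgroup_on_idem_zero[OF hom_abgroup] by blast
qed

lemma comp_zero_left:
  assumes f: "f \<in> Hom X A B" and C: "C \<in> Obj X"
  shows "cp X (mzero X B C) f = mzero X A C"
proof -
  have z: "mzero X B C \<in> Hom X B C" using f C hom_objs mzero_hom by blast
  then have "madd X (cp X (mzero X B C) f) (cp X (mzero X B C) f) = cp X (mzero X B C) f"
    using comp_distrib_right[OF f z z] madd_zero_left by simp
  moreover have "cp X (mzero X B C) f \<in> Hom X A C" using comp_hom[OF f z] .
  ultimately show ?thesis using abgroup_on_idem_zero[OF hom_abgroup] by blast
qed

lemma comp_mneg_right:
  assumes f: "f \<in> Hom X A B" and g: "g \<in> Hom X B C"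
  shows "cp X g (mneg X f) = mneg X (cp X g f)"
proof -
  have "madd X (cp X g (mneg X f)) (cp X g f) = mzero X A C"
    using comp_distrib_left[OF mneg_hom[OF f] f g] madd_neg_left[OF f] comp_zero_right[OF g] hom_objs[OF f]
    by simp
  then show ?thesis using mneg_unique comp_hom mneg_hom f g by metis
qed

lemma comp_mneg_left:
  assumes f: "f \<in> Hom X A B" and g: "g \<in> Hom X B C"
  shows "cp X (mneg X g) f = mneg X (cp X g f)"
proof -
  have "madd X (cp X (mneg X g) f) (cp X g f) = mzero X A C"
    using comp_distrib_right[OF f mneg_hom[OF g] g] madd_neg_left[OF g] comp_zero_left[OF f] hom_objs[OF g]
    by simp
  then show ?thesis using mneg_unique comp_hom mneg_hom f g by metis
qed

lemma EE_objs: "d \<in> EE X C A \<Longrightarrow> C \<in> Obj X \<and> A \<in> Obj X"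
  using biadditive unfolding biadditive_E_def by (metis empty_iff)
lemma EE_abgroup_objs: "C \<in> Obj X \<Longrightarrow> A \<in> Obj X \<Longrightarrow> abgroup_on (EE X C A) (eadd X) (ezero X C A) (eneg X)"
  using biadditive unfolding biadditive_E_def by simp
lemma EE_abgroup: "d \<in> EE X C A \<Longrightarrow> abgroup_on (EE X C A) (eadd X) (ezero X C A) (eneg X)"
  using EE_abgroup_objs EE_objs by blast
lemma push_EE: "a \<in> Hom X A A' \<Longrightarrow> d \<in> EE X C A \<Longrightarrow> push X a d \<in> EE X C A'"
  using biadditive unfolding biadditive_E_def by simp
lemma pull_EE: "c \<in> Hom X C' C \<Longrightarrow> d \<in> EE X C A \<Longrightarrow> pull X c d \<in> EE X C' A"
  using biadditive unfolding biadditive_E_def by simp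
lemma push_id: "d \<in> EE X C A \<Longrightarrow> push X (idm X A) d = d"
  using biadditive unfolding biadditive_E_def by simp
lemma pull_id: "d \<in> EE X C A \<Longrightarrow> pull X (idm X C) d = d"
  using biadditive unfolding biadditive_E_def by simp
lemma push_comp: "a \<in> Hom X A A' \<Longrightarrow> a' \<in> Hom X A' A'' \<Longrightarrow> d \<in> EE X C A \<Longrightarrow>
    push X (cp X a' a) d = push X a' (push X a d)"
  using biadditive unfolding biadditive_E_def by simp
lemma pull_comp: "c \<in> Hom X C' C \<Longrightarrow> c' \<in> Hom X C'' C' \<Longrightarrow> d \<in> EE X C A \<Longrightarrow>
    pull X (cp X c c') d = pull X c' (pull X c d)"
  using biadditive unfolding biadditive_E_def by simp
lemma push_pull_commute: "a \<in> Hom X A A' \<Longrightarrow> c \<in> Hom X C' C \<Longrightarrow> d \<in> EE X C A \<Longrightarrow>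
    push X a (pull X c d) = pull X c (push X a d)"
  using biadditive unfolding biadditive_E_def by simp
lemma pull_eadd: "c \<in> Hom X C' C \<Longrightarrow> d \<in> EE X C A \<Longrightarrow> d' \<in> EE X C A \<Longrightarrow>
    pull X c (eadd X d d') = eadd X (pull X c d) (pull X c d')"
  using biadditive unfolding biadditive_E_def by simp
lemma push_madd: "a \<in> Hom X A A' \<Longrightarrow> a' \<in> Hom X A A' \<Longrightarrow> d \<in> EE X C A \<Longrightarrow>
    push X (madd X a a') d = eadd X (push X a d) (push X a' d)"
  using biadditive unfolding biadditive_E_def by simp
lemma pull_madd: "c \<in> Hom X C' C \<Longrightarrow> c' \<in> Hom X C' C \<Longrightarrow> d \<in> EE X C A \<Longrightarrow>
    pull X (madd X c c') d = eadd X (pull X c d) (pull X c' d)"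
  using biadditive unfolding biadditive_E_def by simp

lemma ezero_EE: "C \<in> Obj X \<Longrightarrow> A \<in> Obj X \<Longrightarrow> ezero X C A \<in> EE X C A"
  using EE_abgroup_objs unfolding abgroup_on_def by blast
lemma eadd_EE: "d \<in> EE X C A \<Longrightarrow> d' \<in> EE X C A \<Longrightarrow> eadd X d d' \<in> EE X C A"
  using EE_abgroup unfolding abgroup_on_def by blast
lemma eneg_EE: "d \<in> EE X C A \<Longrightarrow> eneg X d \<in> EE X C A"
  using EE_abgroup unfolding abgroup_on_def by blast
lemma eadd_assoc: "d \<in> EE X C A \<Longrightarrow> d' \<in> EE X C A \<Longrightarrow> d'' \<in> EE X C A \<Longrightarrow>
    eadd X (eadd X d d') d'' = eadd X d (eadd X d' d'')"
  using EE_abgroup unfolding abgroup_on_def by blast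
lemma eadd_commute: "d \<in> EE X C A \<Longrightarrow> d' \<in> EE X C A \<Longrightarrow> eadd X d d' = eadd X d' d"
  using EE_abgroup unfolding abgroup_on_def by blast
lemma eadd_zero_left: "d \<in> EE X C A \<Longrightarrow> eadd X (ezero X C A) d = d"
  using EE_abgroup unfolding abgroup_on_def by blast
lemma eadd_neg_right: "d \<in> EE X C A \<Longrightarrow> eadd X d (eneg X d) = ezero X C A"
  by (rule abgroup_on_neg_right[OF EE_abgroup])
lemma eneg_unique: "d \<in> EE X C A \<Longrightarrow> d' \<in> EE X C A \<Longrightarrow> eadd X d d' = ezero X C A \<Longrightarrow> d = eneg X d'"
  by (rule abgroup_on_neg_unique[OF EE_abgroup])

lemma push_zero:
  assumes A': "A' \<in> Obj X" and d: "d \<in> EE X C A"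
  shows "push X (mzero X A A') d = ezero X C A'"
proof -
  have z: "mzero X A A' \<in> Hom X A A'" using A' d EE_objs mzero_hom by blast
  then have "eadd X (push X (mzero X A A') d) (push X (mzero X A A') d) = push X (mzero X A A') d"
    using push_madd[OF z z d] madd_zero_left by simp
  moreover have "push X (mzero X A A') d \<in> EE X C A'" using push_EE[OF z d] .
  ultimately show ?thesis using abgroup_on_idem_zero[OF EE_abgroup] by blast
qed

lemma pull_zero:
  assumes C': "C' \<in> Obj X" and d: "d \<in> EE X C A"
  shows "pull X (mzero X C' C) d = ezero X C' A"
proof -
  have z: "mzero X C' C \<in> Hom X C' C" using C' d EE_objs mzero_hom by blast
  then have "eadd X (pull X (mzero X C' C) d) (pull X (mzero X C' C) d) = pull X (mzero X C' C) d"
    using pull_madd[OF z z d] madd_zero_left by simp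
  moreover have "pull X (mzero X C' C) d \<in> EE X C' A" using pull_EE[OF z d] .
  ultimately show ?thesis using abgroup_on_idem_zero[OF EE_abgroup] by blast
qed

lemma pull_ezero:
  assumes c: "c \<in> Hom X C' C" and A: "A \<in> Obj X"
  shows "pull X c (ezero X C A) = ezero X C' A"
proof -
  have z: "ezero X C A \<in> EE X C A" using ezero_EE hom_objs[OF c] A by blast
  have "pull X c (ezero X C A) = pull X c (push X (mzero X A A) (ezero X C A))"
    using push_zero[OF A z] by simp
  also have "\<dots> = push X (mzero X A A) (pull X c (ezero X C A))"
    using push_pull_commute[OF mzero_hom[OF A A] c z] by simp
  also have "\<dots> = ezero X C' A" using push_zero[OF A pull_EE[OF c z]] .
  finally show ?thesis .
qed

lemma pull_eneg:
  assumes c: "c \<in> Hom X C' C" and d: "d \<in> EE X C A"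
  shows "pull X c (eneg X d) = eneg X (pull X c d)"
proof -
  have "eadd X (pull X c (eneg X d)) (pull X c d) = ezero X C' A"
    using pull_eadd[OF c eneg_EE[OF d] d] eadd_commute[OF eneg_EE[OF d] d] eadd_neg_right[OF d]
      pull_ezero[OF c] EE_objs[OF d] by simp
  then show ?thesis using eneg_unique pull_EE eneg_EE c d by metis
qed

lemma is_realization: "realization X"
  using extriangulated by (simp add: extriangulated_def)
lemma is_additive_realization: "additive_realization X"
  using extriangulated by (simp add: extriangulated_def)

lemma rlz_exists: "d \<in> EE X C A \<Longrightarrow> \<exists>B x y. x \<in> Hom X A B \<and> y \<in> Hom X B C \<and> rlz X d x y"
  using is_realization[unfolded realization_def, THEN conjunct2, THEN conjunct1] by blast
lemma rlz_iff_iso: "d \<in> EE X C A \<Longrightarrow> x \<in> Hom X A B \<Longrightarrow> y \<in> Hom X B C \<Longrightarrow> rlz X d x y \<Longrightarrow>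
    x' \<in> Hom X A B' \<Longrightarrow> y' \<in> Hom X B' C \<Longrightarrow>
    rlz X d x' y' \<longleftrightarrow> (\<exists>b. is_iso X b B B' \<and> cp X b x = x' \<and> cp X y' b = y)"
  using is_realization[unfolded realization_def, THEN conjunct2, THEN conjunct2, THEN conjunct1] by blast
lemma rlz_morphism: "d \<in> EE X C A \<Longrightarrow> x \<in> Hom X A B \<Longrightarrow> y \<in> Hom X B C \<Longrightarrow> rlz X d x y \<Longrightarrow>
    d' \<in> EE X C' A' \<Longrightarrow> x' \<in> Hom X A' B' \<Longrightarrow> y' \<in> Hom X B' C' \<Longrightarrow> rlz X d' x' y' \<Longrightarrow>
    a \<in> Hom X A A' \<Longrightarrow> c \<in> Hom X C C' \<Longrightarrow> push X a d = pull X c d' \<Longrightarrow>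
    \<exists>b\<in>Hom X B B'. cp X b x = cp X x' a \<and> cp X y' b = cp X c y"
  using is_realization[unfolded realization_def, THEN conjunct2, THEN conjunct2, THEN conjunct2] by blast
lemma rlz_split: "is_biprod X A C S i1 i2 p1 p2 \<Longrightarrow> rlz X (ezero X C A) i1 p2"
  using is_additive_realization unfolding additive_realization_def by blast
lemma rlz_biprod: "d \<in> EE X C A \<Longrightarrow> x \<in> Hom X A B \<Longrightarrow> y \<in> Hom X B C \<Longrightarrow> rlz X d x y \<Longrightarrow>
    d' \<in> EE X C' A' \<Longrightarrow> x' \<in> Hom X A' B' \<Longrightarrow> y' \<in> Hom X B' C' \<Longrightarrow> rlz X d' x' y' \<Longrightarrow>
    is_biprod X A A' SA iA iA' pA pA' \<Longrightarrow>
    is_biprod X B B' SB iB iB' pB pB' \<Longrightarrow>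
    is_biprod X C C' SC iC iC' pC pC' \<Longrightarrow>
    rlz X (eadd X (push X iA (pull X pC d)) (push X iA' (pull X pC' d')))
          (madd X (cp X iB (cp X x pA)) (cp X iB' (cp X x' pA')))
          (madd X (cp X iC (cp X y pB)) (cp X iC' (cp X y' pB')))"
  by (rule is_additive_realization[unfolded additive_realization_def, THEN conjunct2, rule_format])
lemma ET3: "d \<in> EE X C A \<Longrightarrow> x \<in> Hom X A B \<Longrightarrow> y \<in> Hom X B C \<Longrightarrow> rlz X d x y \<Longrightarrow>
    d' \<in> EE X C' A' \<Longrightarrow> x' \<in> Hom X A' B' \<Longrightarrow> y' \<in> Hom X B' C' \<Longrightarrow> rlz X d' x' y' \<Longrightarrow>
    a \<in> Hom X A A' \<Longrightarrow> b \<in> Hom X B B' \<Longrightarrow> cp X b x = cp X x' a \<Longrightarrow>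
    \<exists>c\<in>Hom X C C'. push X a d = pull X c d' \<and> cp X c y = cp X y' b"
  using extriangulated unfolding extriangulated_def ET3_def by blast
lemma ET3op: "d \<in> EE X C A \<Longrightarrow> x \<in> Hom X A B \<Longrightarrow> y \<in> Hom X B C \<Longrightarrow> rlz X d x y \<Longrightarrow>
    d' \<in> EE X C' A' \<Longrightarrow> x' \<in> Hom X A' B' \<Longrightarrow> y' \<in> Hom X B' C' \<Longrightarrow> rlz X d' x' y' \<Longrightarrow>
    b \<in> Hom X B B' \<Longrightarrow> c \<in> Hom X C C' \<Longrightarrow> cp X y' b = cp X c y \<Longrightarrow>
    \<exists>a\<in>Hom X A A'. push X a d = pull X c d' \<and> cp X b x = cp X x' a"
  using extriangulated unfolding extriangulated_def ET3op_def by blast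
lemma ET4: "d \<in> EE X D A \<Longrightarrow> f \<in> Hom X A B \<Longrightarrow> f' \<in> Hom X B D \<Longrightarrow> rlz X d f f' \<Longrightarrow>
    d' \<in> EE X F B \<Longrightarrow> g \<in> Hom X B C \<Longrightarrow> g' \<in> Hom X C F \<Longrightarrow> rlz X d' g g' \<Longrightarrow>
    \<exists>E h h' dd e d''. E \<in> Obj X \<and> h \<in> Hom X A C \<and> h' \<in> Hom X C E \<and>
       dd \<in> Hom X D E \<and> e \<in> Hom X E F \<and> d'' \<in> EE X E A \<and> rlz X d'' h h' \<and>
       h = cp X g f \<and> cp X dd f' = cp X h' g \<and> cp X e h' = g' \<and>
       rlz X (push X f' d') dd e \<and> pull X dd d'' = d \<and> push X f d'' = pull X e d'"
  using extriangulated unfolding extriangulated_def ET4_def by blast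
lemma ET4op: "d \<in> EE X B D \<Longrightarrow> f' \<in> Hom X D A \<Longrightarrow> f \<in> Hom X A B \<Longrightarrow> rlz X d f' f \<Longrightarrow>
    d' \<in> EE X C F \<Longrightarrow> g' \<in> Hom X F B \<Longrightarrow> g \<in> Hom X B C \<Longrightarrow> rlz X d' g' g \<Longrightarrow>
    \<exists>E dd e h' h d''. E \<in> Obj X \<and> dd \<in> Hom X D E \<and> e \<in> Hom X E F \<and>
       h' \<in> Hom X E A \<and> h \<in> Hom X A C \<and> d'' \<in> EE X C E \<and> rlz X d'' h' h \<and>
       h = cp X g f \<and> cp X h' dd = f' \<and> cp X g' e = cp X f h' \<and>
       rlz X (pull X g' d) dd e \<and> d' = push X e d'' \<and> push X dd d = pull X g d''"
  using extriangulated unfolding extriangulated_def ET4op_def by blast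

lemma biprod_exists: "A \<in> Obj X \<Longrightarrow> B \<in> Obj X \<Longrightarrow> \<exists>S i1 i2 p1 p2. is_biprod X A B S i1 i2 p1 p2"
  using extriangulated unfolding extriangulated_def additive_cat_def by blast
lemma zero_obj_exists: "\<exists>Z. is_zero_obj X Z"
  using extriangulated unfolding extriangulated_def additive_cat_def by blast

lemma etriI: "d \<in> EE X C A \<Longrightarrow> x \<in> Hom X A B \<Longrightarrow> y \<in> Hom X B C \<Longrightarrow> rlz X d x y \<Longrightarrow> etri X A B C"
  unfolding etri_def by blast
lemma etri_objs: "etri X A B C \<Longrightarrow> A \<in> Obj X \<and> B \<in> Obj X \<and> C \<in> Obj X"
  unfolding etri_def using hom_objs by blast

lemma biprod_zero_right: "is_zero_obj X Z \<Longrightarrow> A \<in> Obj X \<Longrightarrow>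
   is_biprod X A Z A (idm X A) (mzero X Z A) (idm X A) (mzero X A Z)"
proof -
  assume Z: "is_zero_obj X Z" and A: "A \<in> Obj X"
  have ZO: "Z \<in> Obj X" "idm X Z = mzero X Z Z" using Z unfolding is_zero_obj_def by auto
  show ?thesis unfolding is_biprod_def
    using A ZO id_hom[OF A] mzero_hom[OF A ZO(1)] mzero_hom[OF ZO(1) A] comp_id_left[OF id_hom[OF A]]
      comp_id_left[OF mzero_hom[OF ZO(1) A]] comp_id_right[OF mzero_hom[OF A ZO(1)]] comp_zero_left[OF mzero_hom[OF ZO(1) A] ZO(1)]
      comp_zero_left[OF mzero_hom[OF A ZO(1)] A] madd_zero_right[OF id_hom[OF A]] by simp
qed

lemma biprod_zero_left: "is_zero_obj X Z \<Longrightarrow> A \<in> Obj X \<Longrightarrow>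
   is_biprod X Z A A (mzero X Z A) (idm X A) (mzero X A Z) (idm X A)"
proof -
  assume Z: "is_zero_obj X Z" and A: "A \<in> Obj X"
  have ZO: "Z \<in> Obj X" "idm X Z = mzero X Z Z" using Z unfolding is_zero_obj_def by auto
  show ?thesis unfolding is_biprod_def
    using A ZO id_hom[OF A] mzero_hom[OF A ZO(1)] mzero_hom[OF ZO(1) A] comp_id_left[OF id_hom[OF A]]
      comp_id_left[OF mzero_hom[OF ZO(1) A]] comp_id_right[OF mzero_hom[OF A ZO(1)]] comp_zero_left[OF mzero_hom[OF ZO(1) A] ZO(1)]
      comp_zero_left[OF mzero_hom[OF A ZO(1)] A] madd_zero_left[OF id_hom[OF A]] by simp
qed

lemma rlz_comp_zero:
  assumes t: "d \<in> EE X C A" "x \<in> Hom X A B" "y \<in> Hom X B C" "rlz X d x y"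
  shows "cp X y x = mzero X A C"
proof -
  obtain Z where Z: "is_zero_obj X Z" using zero_obj_exists by blast
  have O: "Z \<in> Obj X" "A \<in> Obj X" "C \<in> Obj X" using Z t hom_objs unfolding is_zero_obj_def by auto
  have "rlz X (ezero X Z A) (idm X A) (mzero X A Z)" using rlz_split[OF biprod_zero_right[OF Z O(2)]] .
  then obtain c where c: "c \<in> Hom X Z C" "cp X c (mzero X A Z) = cp X y x"
    using ET3[OF ezero_EE[OF O(1,2)] id_hom[OF O(2)] mzero_hom[OF O(2,1)] _ t id_hom[OF O(2)] t(2) refl]
    by blast
  then show ?thesis using comp_zero_right[OF c(1) O(2)] by simp
qed

lemma biprod_iso_transfer:
  assumes bp: "is_biprod X A C S i1 i2 p1 p2"
    and \<phi>: "\<phi> \<in> Hom X S B" and \<psi>: "\<psi> \<in> Hom X B S" and inv: "cp X \<psi> \<phi> = idm X S" "cp X \<phi> \<psi> = idm X B"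
  shows "is_biprod X A C B (cp X \<phi> i1) (cp X \<phi> i2) (cp X p1 \<psi>) (cp X p2 \<psi>)"
proof -
  have b: "i1 \<in> Hom X A S" "i2 \<in> Hom X C S" "p1 \<in> Hom X S A" "p2 \<in> Hom X S C"
    using bp unfolding is_biprod_def by auto
  have cancel: "cp X (cp X p \<psi>) (cp X \<phi> i) = cp X p i" if "i \<in> Hom X D S" "p \<in> Hom X S D'" for i p D D'
    using comp_assoc[OF comp_hom[OF that(1) \<phi>] \<psi> that(2)] comp_assoc[OF that(1) \<phi> \<psi>, symmetric] inv(1)
      comp_id_left[OF that(1)] by simp
  have conj: "cp X \<phi> (cp X (cp X i p) \<psi>) = cp X (cp X \<phi> i) (cp X p \<psi>)" if "i \<in> Hom X D S" "p \<in> Hom X S D" for i p D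
    using comp_assoc[OF comp_hom[OF \<psi> that(2)] that(1) \<phi>] comp_assoc[OF \<psi> that(2) that(1), symmetric] by simp
  have ii: "cp X i1 p1 \<in> Hom X S S" "cp X i2 p2 \<in> Hom X S S" using comp_hom b by blast+
  have "madd X (cp X (cp X \<phi> i1) (cp X p1 \<psi>)) (cp X (cp X \<phi> i2) (cp X p2 \<psi>))
      = cp X \<phi> (cp X (madd X (cp X i1 p1) (cp X i2 p2)) \<psi>)"
    using conj[OF b(1,3)] conj[OF b(2,4)] comp_distrib_right[OF \<psi> ii] comp_distrib_left[OF comp_hom[OF \<psi> ii(1)] comp_hom[OF \<psi> ii(2)] \<phi>]
    by simp
  also have "\<dots> = idm X B" using bp inv(2) comp_id_left[OF \<psi>] unfolding is_biprod_def by simp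
  finally show ?thesis
    using bp cancel[OF b(1) b(3)] cancel[OF b(2) b(4)] cancel[OF b(2) b(3)] cancel[OF b(1) b(4)]
      comp_hom[OF b(1) \<phi>] comp_hom[OF b(2) \<phi>] comp_hom[OF \<psi> b(3)] comp_hom[OF \<psi> b(4)] hom_objs[OF \<psi>]
    unfolding is_biprod_def by simp
qed

lemma rlz_zero_biprod:
  assumes x: "x \<in> Hom X A B" and y: "y \<in> Hom X B C" and r: "rlz X (ezero X C A) x y"
  shows "\<exists>i p. is_biprod X A C B x i p y"
proof -
  have O: "A \<in> Obj X" "C \<in> Obj X" using x y hom_objs by auto
  obtain S i1 i2 p1 p2 where bp: "is_biprod X A C S i1 i2 p1 p2" using biprod_exists O by blast
  then have b: "i1 \<in> Hom X A S" "p2 \<in> Hom X S C" unfolding is_biprod_def by auto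
  obtain \<phi> where \<phi>: "is_iso X \<phi> S B" "cp X \<phi> i1 = x" "cp X y \<phi> = p2"
    using rlz_iff_iso[OF ezero_EE[OF O(2,1)] b(1,2) rlz_split[OF bp] x y] r by blast
  then obtain \<psi> where \<psi>: "\<phi> \<in> Hom X S B" "\<psi> \<in> Hom X B S" "cp X \<psi> \<phi> = idm X S" "cp X \<phi> \<psi> = idm X B"
    unfolding is_iso_def by blast
  have "cp X p2 \<psi> = y"
    using \<phi>(3) comp_assoc[OF \<psi>(2) \<psi>(1) y] \<psi>(4) comp_id_right[OF y] by simp
  then show ?thesis using biprod_iso_transfer[OF bp \<psi>] \<phi>(2) by auto
qed

lemma pull_eq_zero_imp_push:
  assumes \<theta>: "\<theta> \<in> EE X C A'" and t: "\<delta> \<in> EE X C A" "x \<in> Hom X A B" "y \<in> Hom X B C" "rlz X \<delta> x y"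
    and zero: "pull X y \<theta> = ezero X B A'"
  shows "\<exists>\<phi>\<in>Hom X A A'. push X \<phi> \<delta> = \<theta>"
proof -
  have O: "A' \<in> Obj X" "B \<in> Obj X" "C \<in> Obj X" using \<theta> t hom_objs EE_objs by auto
  obtain B' x' y' where t': "x' \<in> Hom X A' B'" "y' \<in> Hom X B' C" "rlz X \<theta> x' y'"
    using rlz_exists[OF \<theta>] by blast
  obtain P i1 i2 p1 p2 where bp: "is_biprod X A' B P i1 i2 p1 p2" using biprod_exists O by blast
  then have b: "i1 \<in> Hom X A' P" "i2 \<in> Hom X B P" "p2 \<in> Hom X P B" "cp X p2 i2 = idm X B"
    unfolding is_biprod_def by auto
  have "push X (idm X A') (ezero X B A') = pull X y \<theta>" using push_id[OF ezero_EE[OF O(2,1)]] zero by simp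
  then obtain b where b': "b \<in> Hom X P B'" "cp X y' b = cp X y p2"
    using rlz_morphism[OF ezero_EE[OF O(2,1)] b(1,3) rlz_split[OF bp] \<theta> t' id_hom[OF O(1)] t(3)] by blast
  have "cp X y' (cp X b i2) = cp X (idm X C) y"
    using comp_assoc[OF b(2) b'(1) t'(2), symmetric] b'(2) comp_assoc[OF b(2) b(3) t(3)] b(4)
      comp_id_right[OF t(3)] comp_id_left[OF t(3)] by simp
  then obtain \<phi> where "\<phi> \<in> Hom X A A'" "push X \<phi> \<delta> = pull X (idm X C) \<theta>"
    using ET3op[OF t \<theta> t' comp_hom[OF b(2) b'(1)] id_hom[OF O(3)]] by blast
  then show ?thesis using pull_id[OF \<theta>] by auto
qed

lemma biprod_shear:
  assumes bp: "is_biprod X F L E0 dd s r e" and ph: "\<phi> \<in> Hom X L F"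
  shows "is_biprod X L F E0 (madd X s (mneg X (cp X dd \<phi>))) dd e (madd X r (cp X \<phi> e))"
proof -
  from bp have b: "E0 \<in> Obj X" "dd \<in> Hom X F E0" "s \<in> Hom X L E0" "r \<in> Hom X E0 F" "e \<in> Hom X E0 L"
     "cp X r dd = idm X F" "cp X e s = idm X L" "cp X r s = mzero X L F" "cp X e dd = mzero X F L"
     "madd X (cp X dd r) (cp X s e) = idm X E0" unfolding is_biprod_def by auto
  have O: "F \<in> Obj X" "L \<in> Obj X" using ph hom_objs by auto
  define X1 where "X1 = cp X dd \<phi>"
  have X1h: "X1 \<in> Hom X L E0" unfolding X1_def using comp_hom ph b by blast
  have pe: "cp X \<phi> e \<in> Hom X E0 F" using comp_hom ph b by blast
  define s' where "s' = madd X s (mneg X X1)"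
  define r' where "r' = madd X r (cp X \<phi> e)"
  have s'h: "s' \<in> Hom X L E0" unfolding s'_def using madd_hom mneg_hom X1h b by blast
  have r'h: "r' \<in> Hom X E0 F" unfolding r'_def using madd_hom pe b by blast
  have eX1: "cp X e X1 = mzero X L L" unfolding X1_def
    using comp_assoc[OF ph b(2) b(5), symmetric] b(9) comp_zero_left[OF ph O(2)] by simp
  have rX1: "cp X r X1 = \<phi>" unfolding X1_def
    using comp_assoc[OF ph b(2) b(4), symmetric] b(6) comp_id_left[OF ph] by simp
  have c1: "cp X e s' = idm X L" unfolding s'_def
    using comp_distrib_left[OF b(3) mneg_hom[OF X1h] b(5)] comp_mneg_right[OF X1h b(5)] eX1 b(7) mneg_zero[OF O(2) O(2)]
      madd_zero_right[OF id_hom[OF O(2)]] by simp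
  have c2: "cp X r' dd = idm X F" unfolding r'_def
    using comp_distrib_right[OF b(2) b(4) pe] comp_assoc[OF b(2) b(5) ph] b(6) b(9) comp_zero_right[OF ph O(1)]
      madd_zero_right[OF id_hom[OF O(1)]] by simp
  have c4: "cp X r' s' = mzero X L F"
  proof -
    have rs': "cp X r s' = mneg X \<phi>" unfolding s'_def
      using comp_distrib_left[OF b(3) mneg_hom[OF X1h] b(4)] comp_mneg_right[OF X1h b(4)] rX1 b(8) madd_zero_left[OF mneg_hom[OF ph]] by simp
    have ps': "cp X (cp X \<phi> e) s' = \<phi>"
      using comp_assoc[OF s'h b(5) ph] c1 comp_id_right[OF ph] by simp
    show ?thesis unfolding r'_def using comp_distrib_right[OF s'h b(4) pe] rs' ps' madd_neg_left[OF ph] by simp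
  qed
  have c5: "madd X (cp X s' e) (cp X dd r') = idm X E0"
  proof -
    have Y: "cp X X1 e \<in> Hom X E0 E0" using comp_hom X1h b by blast
    have se: "cp X s e \<in> Hom X E0 E0" "cp X dd r \<in> Hom X E0 E0" using comp_hom b by blast+
    have "cp X s' e = madd X (cp X s e) (mneg X (cp X X1 e))" unfolding s'_def
      using comp_distrib_right[OF b(5) b(3) mneg_hom[OF X1h]] comp_mneg_left[OF b(5) X1h] by simp
    moreover have "cp X dd r' = madd X (cp X dd r) (cp X X1 e)" unfolding r'_def X1_def
      using comp_distrib_left[OF b(4) pe b(2)] comp_assoc[OF b(5) ph b(2), symmetric] by simp
    ultimately show ?thesis
      using abgroup_on_add_neg_cancel[OF hom_abgroup[OF Y] se Y] madd_commute[OF se] b(10) by simp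
  qed
  show ?thesis unfolding is_biprod_def
    using b s'h r'h c1 c2 c4 c5 unfolding s'_def[symmetric] r'_def[symmetric] X1_def[symmetric] by simp
qed


subsection \<open>The horseshoe construction\<close>

text \<open>The retraction r is corrected by \<phi> e, where \<phi> realises the difference of \<delta> and
  r_* d, which is killed by y^*; the section is sheared accordingly.\<close>

lemma biprod_shear_push:
  assumes bp: "is_biprod X F L E0 dd s r e" and d: "d \<in> EE X K E0"
    and x: "x \<in> Hom X L E" and y: "y \<in> Hom X E K" and r1: "rlz X (push X e d) x y"
    and \<delta>: "\<delta> \<in> EE X K F" and eq: "pull X y (push X r d) = pull X y \<delta>"
  shows "\<exists>s' r'. is_biprod X L F E0 s' dd e r' \<and> push X r' d = \<delta>"
proof -
  have b: "dd \<in> Hom X F E0" "s \<in> Hom X L E0" "r \<in> Hom X E0 F" "e \<in> Hom X E0 L"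
    using bp unfolding is_biprod_def by auto
  define P where "P = push X r d"
  have P: "P \<in> EE X K F" unfolding P_def using push_EE b d by blast
  define \<theta> where "\<theta> = eadd X \<delta> (eneg X P)"
  have \<theta>: "\<theta> \<in> EE X K F" unfolding \<theta>_def using eadd_EE eneg_EE P \<delta> by blast
  have "pull X y \<theta> = ezero X E F" unfolding \<theta>_def
    using pull_eadd[OF y \<delta> eneg_EE[OF P]] pull_eneg[OF y P] eq eadd_neg_right[OF pull_EE[OF y \<delta>]]
    unfolding P_def by simp
  then obtain \<phi> where \<phi>: "\<phi> \<in> Hom X L F" "push X \<phi> (push X e d) = \<theta>"
    using pull_eq_zero_imp_push[OF \<theta> push_EE[OF b(4) d] x y r1] by blast
  have "push X (madd X r (cp X \<phi> e)) d = eadd X P \<theta>"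
    unfolding P_def using push_madd[OF b(3) comp_hom[OF b(4) \<phi>(1)] d] push_comp[OF b(4) \<phi>(1) d] \<phi>(2)
    by simp
  also have "\<dots> = \<delta>" unfolding \<theta>_def
    using eadd_commute[OF \<delta> eneg_EE[OF P]] eadd_assoc[OF P eneg_EE[OF P] \<delta>, symmetric]
      eadd_neg_right[OF P] eadd_zero_left[OF \<delta>] by simp
  finally show ?thesis using biprod_shear[OF bp \<phi>(1)] by blast
qed

lemma pullback_octahedron_split:
  assumes d1: "\<delta>1 \<in> EE X K L" "x1 \<in> Hom X L E" "y1 \<in> Hom X E K" "rlz X \<delta>1 x1 y1"
    and d2: "\<delta>2 \<in> EE X K F"
    and m: "m \<in> Hom X F M" "e \<in> Hom X M E" "rlz X (pull X y1 \<delta>2) m e"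
  shows "\<exists>E0 s dd p r d h' h. is_biprod X L F E0 s dd p r \<and> d \<in> EE X K E0 \<and>
           h' \<in> Hom X E0 M \<and> h \<in> Hom X M K \<and> rlz X d h' h \<and> push X r d = \<delta>2"
proof -
  have pd: "pull X y1 \<delta>2 \<in> EE X E F" using pull_EE d1 d2 by blast
  obtain E0 dd p h' h d where o: "dd \<in> Hom X F E0" "p \<in> Hom X E0 L"
    "h' \<in> Hom X E0 M" "h \<in> Hom X M K" "d \<in> EE X K E0" "rlz X d h' h"
    "rlz X (pull X x1 (pull X y1 \<delta>2)) dd p" "\<delta>1 = push X p d"
    "push X dd (pull X y1 \<delta>2) = pull X y1 d"
    using ET4op[OF pd m d1] by blast
  have "pull X x1 (pull X y1 \<delta>2) = ezero X L F"
    using pull_comp[OF d1(3) d1(2) d2, symmetric] rlz_comp_zero[OF d1] pull_zero[OF _ d2] hom_objs[OF d1(2)]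
    by simp
  then obtain s r where bp: "is_biprod X F L E0 dd s r p"
    using rlz_zero_biprod[OF o(1) o(2)] o(7) by auto
  then have r: "r \<in> Hom X E0 F" "cp X r dd = idm X F" unfolding is_biprod_def by auto
  have "pull X y1 (push X r d) = pull X y1 \<delta>2"
    using push_pull_commute[OF r(1) d1(3) o(5), symmetric] o(9)[symmetric]
      push_comp[OF o(1) r(1) pd, symmetric] r(2) push_id[OF pd] by simp
  then show ?thesis
    using biprod_shear_push[OF bp o(5) d1(2) d1(3)] o d1(4) d2 by metis
qed

text \<open>Half of the pullback diagram of Nakaoka--Palu (Prop. 3.15), with the third term only
  determined up to isomorphism.\<close>

lemma pullback_etri:
  assumes d1: "\<delta>1 \<in> EE X K L" "x1 \<in> Hom X L E" "y1 \<in> Hom X E K" "rlz X \<delta>1 x1 y1"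
    and d2: "\<delta>2 \<in> EE X K F" "x2 \<in> Hom X F B" "y2 \<in> Hom X B K" "rlz X \<delta>2 x2 y2"
    and m: "m \<in> Hom X F M" "e \<in> Hom X M E" "rlz X (pull X y1 \<delta>2) m e"
  shows "\<exists>N. isomorphic X B N \<and> etri X L M N"
proof -
  obtain E0 s dd p r d h' h where o: "is_biprod X L F E0 s dd p r" "d \<in> EE X K E0"
      "h' \<in> Hom X E0 M" "h \<in> Hom X M K" "rlz X d h' h" "push X r d = \<delta>2"
    using pullback_octahedron_split[OF d1 d2(1) m] by blast
  have sr: "s \<in> Hom X L E0" "r \<in> Hom X E0 F" using o(1) unfolding is_biprod_def by auto
  have FL: "F \<in> Obj X" "L \<in> Obj X" using sr hom_objs by auto
  obtain N H H' dd2 e2 d3 where t: "N \<in> Obj X" "H \<in> Hom X L M" "H' \<in> Hom X M N"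
      "dd2 \<in> Hom X F N" "e2 \<in> Hom X N K" "d3 \<in> EE X N L" "rlz X d3 H H'" "rlz X (push X r d) dd2 e2"
    using ET4[OF ezero_EE[OF FL] sr rlz_split[OF o(1)] o(2-5)] by blast
  have "\<exists>b. is_iso X b B N \<and> cp X b x2 = dd2 \<and> cp X e2 b = y2"
    using rlz_iff_iso[OF d2 t(4) t(5)] t(8) o(6) by simp
  then have "isomorphic X B N" unfolding isomorphic_def by blast
  then show ?thesis using etriI[OF t(6) t(2) t(3) t(7)] by blast
qed

lemma etri_split:
  assumes t: "etri X L M N" and vanish: "EE X N L = {ezero X N L}"
  shows "\<exists>H i p H'. is_biprod X L N M H i p H'"
proof -
  obtain d H H' where "d \<in> EE X N L" "H \<in> Hom X L M" "H' \<in> Hom X M N" "rlz X d H H'"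
    using t unfolding etri_def by blast
  then have "\<exists>i p. is_biprod X L N M H i p H'" using vanish rlz_zero_biprod by simp
  then show ?thesis by blast
qed

lemma etri_biprod_right:
  assumes t: "etri X A B C" and C: "is_biprod X C N C' iC iN pC pN"
    and B: "is_biprod X B N B' iB iN' pB pN'"
  shows "etri X A B' C'"
proof -
  obtain d x y where t: "d \<in> EE X C A" "x \<in> Hom X A B" "y \<in> Hom X B C" "rlz X d x y"
    using t unfolding etri_def by blast
  obtain Z where Z: "is_zero_obj X Z" using zero_obj_exists by blast
  have O: "Z \<in> Obj X" "N \<in> Obj X" "A \<in> Obj X" using Z C t(2) hom_objs unfolding is_zero_obj_def is_biprod_def
    by auto
  have b: "iB \<in> Hom X B B'" "pB \<in> Hom X B' B" "iN' \<in> Hom X N B'" "pN' \<in> Hom X B' N"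
    "iC \<in> Hom X C C'" "iN \<in> Hom X N C'" "pC \<in> Hom X C' C" "pN \<in> Hom X C' N"
    using B C unfolding is_biprod_def by auto
  have z: "ezero X N Z \<in> EE X N Z" "mzero X Z N \<in> Hom X Z N" "idm X N \<in> Hom X N N"
    "idm X A \<in> Hom X A A" "mzero X Z A \<in> Hom X Z A" "mzero X A Z \<in> Hom X A Z"
    using O ezero_EE mzero_hom id_hom by auto
  have "rlz X (ezero X N Z) (mzero X Z N) (idm X N)" using rlz_split[OF biprod_zero_left[OF Z O(2)]] .
  note r = rlz_biprod[OF t z(1-3) this biprod_zero_right[OF Z O(3)] B C]
  show ?thesis
  proof (rule etriI[OF _ _ _ r])
    show "eadd X (push X (idm X A) (pull X pC d)) (push X (mzero X Z A) (pull X pN (ezero X N Z)))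
        \<in> EE X C' A"
      using eadd_EE push_EE pull_EE b t(1) z by metis
    show "madd X (cp X iB (cp X x (idm X A))) (cp X iN' (cp X (mzero X Z N) (mzero X A Z))) \<in> Hom X A B'"
      using madd_hom comp_hom b t(2) z by metis
    show "madd X (cp X iC (cp X y pB)) (cp X iN (cp X (idm X N) pN')) \<in> Hom X B' C'"
      using madd_hom comp_hom b t(3) z by metis
  qed
qed

lemma horseshoe:
  assumes T: "subcat X T"
    and EK: "etri X L E K" and BK: "etri X F B K" "B \<in> T"
    and L: "etri X L' TL L" "TL \<in> T" "\<forall>N\<in>T. EE X N L = {ezero X N L}"
  shows "\<exists>S G. S \<in> T \<and> etri X G S E \<and> etri X L' G F"
proof -
  obtain \<delta>1 x1 y1 where d1: "\<delta>1 \<in> EE X K L" "x1 \<in> Hom X L E" "y1 \<in> Hom X E K" "rlz X \<delta>1 x1 y1"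
    using EK unfolding etri_def by blast
  obtain \<delta>2 x2 y2 where d2: "\<delta>2 \<in> EE X K F" "x2 \<in> Hom X F B" "y2 \<in> Hom X B K" "rlz X \<delta>2 x2 y2"
    using BK unfolding etri_def by blast
  have pd: "pull X y1 \<delta>2 \<in> EE X E F" using pull_EE d1 d2 by blast
  obtain M m e where m: "m \<in> Hom X F M" "e \<in> Hom X M E" "rlz X (pull X y1 \<delta>2) m e"
    using rlz_exists[OF pd] by blast
  obtain N where N: "isomorphic X B N" "etri X L M N" using pullback_etri[OF d1 d2 m] by blast
  have "N \<in> T" using T N(1) BK(2) unfolding subcat_def by blast
  then obtain H i p H' where M: "is_biprod X L N M H i p H'"
    using etri_split[OF N(2)] L(3) by blast
  have O: "TL \<in> Obj X" "N \<in> Obj X" using etri_objs L(1) N(2) by auto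
  obtain S iS iS' pS pS' where S: "is_biprod X TL N S iS iS' pS pS'" using biprod_exists[OF O] by blast
  have "S \<in> T" using T S L(2) \<open>N \<in> T\<close> unfolding subcat_def by blast
  obtain \<epsilon> \<iota> \<pi> where s: "\<epsilon> \<in> EE X M L'" "\<iota> \<in> Hom X L' S" "\<pi> \<in> Hom X S M" "rlz X \<epsilon> \<iota> \<pi>"
    using etri_biprod_right[OF L(1) M S] unfolding etri_def by blast
  obtain G g g' h' h d where G: "g \<in> Hom X L' G" "g' \<in> Hom X G F" "h' \<in> Hom X G S" "h \<in> Hom X S E"
      "d \<in> EE X E G" "rlz X d h' h" "rlz X (pull X m \<epsilon>) g g'"
    using ET4op[OF s pd m] by blast
  have "etri X G S E" using etriI[OF G(5) G(3) G(4) G(6)] .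
  moreover have "etri X L' G F" using etriI[OF pull_EE[OF m(1) s(1)] G(1) G(2) G(7)] .
  ultimately show ?thesis using \<open>S \<in> T\<close> by blast
qed

end

subsection \<open>Presentation classes\<close>

definition perp_resolvable :: "('o,'m,'e) extri_data \<Rightarrow> 'o set \<Rightarrow> 'o \<Rightarrow> bool" where
  "perp_resolvable X T L \<longleftrightarrow> (\<exists>K Ts. K 0 = L \<and>
     (\<forall>i. Ts i \<in> T \<and> K i \<in> perp X T \<and> etri X (K (Suc i)) (Ts i) (K i)))"

lemma perp_resolvable_step:
  assumes "perp_resolvable X T L"
  shows "L \<in> perp X T \<and> (\<exists>L' T0. T0 \<in> T \<and> etri X L' T0 L \<and> perp_resolvable X T L')"
proof -
  obtain K Ts where K: "K 0 = L" "\<forall>i. Ts i \<in> T \<and> K i \<in> perp X T \<and> etri X (K (Suc i)) (Ts i) (K i)"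
    using assms unfolding perp_resolvable_def by blast
  have "perp_resolvable X T (K 1)"
    unfolding perp_resolvable_def using K(2) by (intro exI[of _ "K \<circ> Suc"] exI[of _ "Ts \<circ> Suc"]) auto
  then show ?thesis using K by (metis One_nat_def)
qed

lemma TX_first_etri:
  assumes "A \<in> TX X T"
  shows "\<exists>L T0. T0 \<in> T \<and> etri X L T0 A \<and> perp_resolvable X T L"
proof -
  obtain K Ts where K: "K 0 = A" "\<forall>i. Ts i \<in> T \<and> K (Suc i) \<in> perp X T \<and> etri X (K (Suc i)) (Ts i) (K i)"
    using assms unfolding TX_def by blast
  have "perp_resolvable X T (K 1)"
    unfolding perp_resolvable_def using K(2) by (intro exI[of _ "K \<circ> Suc"] exI[of _ "Ts \<circ> Suc"]) auto
  then show ?thesis using K by (metis One_nat_def)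
qed

lemma perp_EE_eq_zero: "L \<in> perp X T \<Longrightarrow> N \<in> T \<Longrightarrow> EE X N L = {ezero X N L}"
  unfolding perp_def Ehi_vanishes_def Ehi_def by auto

lemma Pres_0: "Pres X 0 S = Obj X"
  unfolding Pres_def by auto

lemma Pres_mono: "S \<subseteq> S' \<Longrightarrow> Pres X n S \<subseteq> Pres X n S'"
  unfolding Pres_def by blast

context extriangulated_cat
begin

lemma Pres_Suc: "A \<in> Pres X (Suc n) S \<longleftrightarrow>
    A \<in> Obj X \<and> (\<exists>K S1. S1 \<in> S \<and> etri X K S1 A \<and> K \<in> Pres X n S)"
proof
  assume "A \<in> Pres X (Suc n) S"
  then obtain K Ss where A: "A \<in> Obj X" "K 1 = A"
    and h: "\<And>i. 1 \<le> i \<Longrightarrow> i \<le> Suc n \<Longrightarrow> Ss i \<in> S \<and> etri X (K (Suc i)) (Ss i) (K i)"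
    unfolding Pres_def by blast
  have 1: "Ss 1 \<in> S" "etri X (K 2) (Ss 1) A" using h[of 1] A by (auto simp: numeral_2_eq_2)
  have "K 2 \<in> Pres X n S" unfolding Pres_def
  proof (intro CollectI conjI exI)
    show "K 2 \<in> Obj X" using 1 etri_objs by blast
    show "(K \<circ> Suc) 1 = K 2" by (simp add: numeral_2_eq_2)
    show "\<forall>i. 1 \<le> i \<and> i \<le> n \<longrightarrow> (Ss \<circ> Suc) i \<in> S \<and> etri X ((K \<circ> Suc) (Suc i)) ((Ss \<circ> Suc) i) ((K \<circ> Suc) i)"
      using h by auto
  qed
  then show "A \<in> Obj X \<and> (\<exists>K S1. S1 \<in> S \<and> etri X K S1 A \<and> K \<in> Pres X n S)"
    using A 1 by blast
next
  assume "A \<in> Obj X \<and> (\<exists>K S1. S1 \<in> S \<and> etri X K S1 A \<and> K \<in> Pres X n S)"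
  then obtain K2 S1 K' Ss' where A: "A \<in> Obj X" "S1 \<in> S" "etri X K2 S1 A" "K' 1 = K2"
    and h: "\<forall>i. 1 \<le> i \<and> i \<le> n \<longrightarrow> Ss' i \<in> S \<and> etri X (K' (Suc i)) (Ss' i) (K' i)"
    unfolding Pres_def by blast
  define K where "K i = (if i \<le> 1 then A else K' (i - 1))" for i
  define Ss where "Ss i = (if i = 1 then S1 else Ss' (i - 1))" for i
  have "Ss i \<in> S \<and> etri X (K (Suc i)) (Ss i) (K i)" if i: "1 \<le> i" "i \<le> Suc n" for i
  proof (cases "i = 1")
    case True
    then show ?thesis using A unfolding K_def Ss_def by simp
  next
    case False
    then have "1 \<le> i - 1" "i - 1 \<le> n" using i by auto
    then have "Ss' (i - 1) \<in> S \<and> etri X (K' (Suc (i - 1))) (Ss' (i - 1)) (K' (i - 1))"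
      using h by blast
    moreover have "Suc (i - 1) = i" using i False by auto
    ultimately show ?thesis using False i unfolding K_def Ss_def by auto
  qed
  moreover have "K 1 = A" unfolding K_def by simp
  ultimately show "A \<in> Pres X (Suc n) S" unfolding Pres_def using A(1) by blast
qed

lemma Pres_extension_closed:
  assumes T: "subcat X T"
  shows "perp_resolvable X T L \<Longrightarrow> K \<in> Pres X m T \<Longrightarrow> etri X L E K \<Longrightarrow> E \<in> Pres X m T"
proof (induction m arbitrary: L E K)
  case 0
  then show ?case using etri_objs[OF 0(3)] by (simp add: Pres_0)
next
  case (Suc m)
  obtain F B where K: "B \<in> T" "etri X F B K" "F \<in> Pres X m T"
    using Suc.prems(2)[unfolded Pres_Suc] by blast
  obtain L' TL where L: "L \<in> perp X T" "TL \<in> T" "etri X L' TL L" "perp_resolvable X T L'"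
    using perp_resolvable_step[OF Suc.prems(1)] by blast
  have "\<forall>N\<in>T. EE X N L = {ezero X N L}" using perp_EE_eq_zero[OF L(1)] by blast
  then obtain S G where S: "S \<in> T" "etri X G S E" "etri X L' G F"
    using horseshoe[OF T Suc.prems(3) K(2) K(1) L(3) L(2)] by blast
  have "G \<in> Pres X m T" using Suc.IH[OF L(4) K(3) S(3)] .
  moreover have "E \<in> Obj X" using etri_objs[OF S(2)] by blast
  ultimately show ?case unfolding Pres_Suc using S(1,2) by blast
qed

lemma Pres_TX_subset:
  assumes T: "subcat X T"
  shows "Pres X n (TX X T) \<subseteq> Pres X n T"
proof (induction n)
  case 0
  then show ?case by (simp add: Pres_0)
next
  case (Suc n)
  show ?case
  proof
    fix A assume "A \<in> Pres X (Suc n) (TX X T)"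
    then obtain K A1 where A: "A \<in> Obj X" "A1 \<in> TX X T" "etri X K A1 A" "K \<in> Pres X n (TX X T)"
      unfolding Pres_Suc by blast
    obtain L T0 where L: "T0 \<in> T" "etri X L T0 A1" "perp_resolvable X T L" using TX_first_etri[OF A(2)] by blast
    obtain d f' f where t1: "d \<in> EE X A1 L" "f' \<in> Hom X L T0" "f \<in> Hom X T0 A1" "rlz X d f' f"
      using L(2) unfolding etri_def by blast
    obtain d' g' g where t2: "d' \<in> EE X A K" "g' \<in> Hom X K A1" "g \<in> Hom X A1 A" "rlz X d' g' g"
      using A(3) unfolding etri_def by blast
    obtain E dd e h' h d'' where o: "dd \<in> Hom X L E" "e \<in> Hom X E K"
        "h' \<in> Hom X E T0" "h \<in> Hom X T0 A" "d'' \<in> EE X A E" "rlz X d'' h' h" "rlz X (pull X g' d) dd e"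
      using ET4op[OF t1 t2] by blast
    have "etri X L E K" using etriI[OF pull_EE[OF t2(2) t1(1)] o(1) o(2) o(7)] .
    moreover have "K \<in> Pres X n T" using Suc.IH A(4) by blast
    ultimately have "E \<in> Pres X n T" using Pres_extension_closed[OF T L(3)] by blast
    moreover have "etri X E T0 A" using etriI[OF o(5) o(3) o(4) o(6)] .
    ultimately show "A \<in> Pres X (Suc n) T" unfolding Pres_Suc using A(1) L(1) by blast
  qed
qed

lemma Omega_obj:
  assumes "enough_projectives X" and Y: "Y \<in> Obj X"
  shows "Omega X Y \<in> Obj X"
proof -
  obtain A P where "projective X P" "etri X A P Y"
    using assms unfolding enough_projectives_def by blast
  then have "\<exists>K. K \<in> Obj X \<and> (\<exists>P. projective X P \<and> etri X K P Y)" using etri_objs by blast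
  from someI_ex[OF this] show ?thesis unfolding Omega_def by blast
qed

lemma EE_zero_obj:
  assumes Z: "is_zero_obj X Z" and Y: "Y \<in> Obj X"
  shows "EE X Y Z = {ezero X Y Z}"
proof -
  have Z: "Z \<in> Obj X" "idm X Z = mzero X Z Z" using Z unfolding is_zero_obj_def by auto
  have "d = ezero X Y Z" if "d \<in> EE X Y Z" for d
    using push_id[OF that] push_zero[OF Z(1) that] Z(2) by simp
  then show ?thesis using ezero_EE[OF Y Z(1)] by blast
qed

lemma zero_obj_perp:
  assumes "enough_projectives X" and T: "T \<subseteq> Obj X" and Z: "is_zero_obj X Z"
  shows "Z \<in> perp X T"
proof -
  have Omega_pow: "(Omega X ^^ k) Y \<in> Obj X" if "Y \<in> Obj X" for k Y
    using that Omega_obj[OF assms(1)] by (induction k) auto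
  have "Ehi_vanishes X i A Z" if "A \<in> T" for i A
  proof -
    have "(Omega X ^^ (i - 1)) A \<in> Obj X" using Omega_pow that T by blast
    then show ?thesis unfolding Ehi_vanishes_def Ehi_def using EE_zero_obj[OF Z] by simp
  qed
  moreover have "Z \<in> Obj X" using Z unfolding is_zero_obj_def by blast
  ultimately show ?thesis unfolding perp_def by blast
qed

lemma subset_TX:
  assumes "enough_projectives X" and T: "subcat X T"
  shows "T \<subseteq> TX X T"
proof
  fix A assume A: "A \<in> T"
  have T_obj: "T \<subseteq> Obj X" using T unfolding subcat_def by simp
  obtain Z where Z: "Z \<in> T" "is_zero_obj X Z" using T unfolding subcat_def by blast
  have O: "Z \<in> Obj X" "A \<in> Obj X" using T_obj A Z(1) by auto
  have Z_etri: "etri X Z B B" if "B \<in> Obj X" for B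
    using etriI[OF ezero_EE[OF that O(1)] mzero_hom[OF O(1) that] id_hom[OF that]
        rlz_split[OF biprod_zero_left[OF Z(2) that]]] .
  have Z_perp: "Z \<in> perp X T" using zero_obj_perp[OF assms(1) T_obj Z(2)] .
  define K where "K i = (if i = 0 then A else Z)" for i :: nat
  have K: "K i \<in> T \<and> K (Suc i) \<in> perp X T \<and> etri X (K (Suc i)) (K i) (K i)" for i
  proof (cases i)
    case 0
    then show ?thesis using A Z_perp Z_etri[OF O(2)] unfolding K_def by simp
  next
    case (Suc j)
    then show ?thesis using Z(1) Z_perp Z_etri[OF O(1)] unfolding K_def by simp
  qed
  show "A \<in> TX X T" unfolding TX_def
  proof (intro CollectI conjI exI[of _ K])
    show "A \<in> Obj X" by (fact O(2))
    show "K 0 = A" unfolding K_def by simp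
    show "\<forall>i. K i \<in> T \<and> K (Suc i) \<in> perp X T \<and> etri X (K (Suc i)) (K i) (K i)" using K by blast
  qed
qed

end

theorem lemma4p6:
  fixes X :: "('o,'m,'e) extri_data" and T :: "'o set" and n :: nat
  assumes "extriangulated X"
    and "krull_schmidt X"
    and "enough_projectives X"
    and "enough_injectives X"
    and "subcat X T"
    and "self_orthogonal X T"
  shows "Pres X n T = Pres X n (TX X T)"
proof -
  interpret extriangulated_cat X using assms(1) by unfold_locales
  show ?thesis using Pres_TX_subset[OF assms(5)] Pres_mono[OF subset_TX[OF assms(3,5)]] by blast
qed

end
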